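(* Let $\mathcal{H}$ be a complex Hilbert space and $A,B,C,D\in\mathcal{B}(\mathcal{H})$. Then for every $0\le\alpha\le1$, $$\begin{aligned}w^4\left(\begin{bmatrix}A & B\\ C & D\end{bmatrix}\right)\le{}& 8\max\{w^4(A),w^4(D)\}+(1+\alpha)\max\left\{\big\||B|^4+|C^*|^4\big\|,\ \big\||B^*|^4+|C|^4\big\|\right\}\\&+2(1-\alpha)\max\{w^2(BC),w^2(CB)\}\\&+2\max\left\{\big\||B|^2+|C^*|^2\big\|,\ \big\||B^*|^2+|C|^2\big\|\right\}\cdot\max\{w(BC),w(CB)\}.\end{aligned}$$
   Context: $\mathcal{B}(\mathcal{H})$ is the algebra of bounded linear operators on $\mathcal{H}$ with operator norm $\|\cdot\|$. For $T\in\mathcal{B}(\mathcal{H})$, $T^*$ is the adjoint, $|T|=(T^*T)^{1/2}$, $|T^*|=(TT^* )^{1/2}$, and $w(T)=\sup_{\|x\|=1}|\langle Tx,x\rangle|$ is the numerical radius. The operator matrix $\begin{bmatrix}A&B\\C&D\end{bmatrix}$ acts on $\mathcal{H}\oplus\mathcal{H}$ by $(x_1,x_2)\mapsto(Ax_1+Bx_2,\,Cx_1+Dx_2)$. *)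

theory Defs
  imports "HOL-Analysis.Analysis"
begin

text \<open>Complex Hilbert spaces: a Banach space (over the reals, as in the library) equipped
  with a complex scalar multiplication compatible with the real one, and a complex inner
  product (linear in the first argument, conjugate symmetric) inducing the norm.\<close>

class chilbert = banach +
  fixes scaleC :: "complex \<Rightarrow> 'a \<Rightarrow> 'a"
    and cinner :: "'a \<Rightarrow> 'a \<Rightarrow> complex"
  assumes scaleC_of_real: "scaleC (of_real r) x = scaleR r x"
    and scaleC_add_right: "scaleC a (x + y) = scaleC a x + scaleC a y"
    and scaleC_add_left: "scaleC (a + b) x = scaleC a x + scaleC b x"
    and scaleC_scaleC: "scaleC a (scaleC b x) = scaleC (a * b) x"
    and scaleC_one: "scaleC 1 x = x"
    and cinner_add_left: "cinner (x + y) z = cinner x z + cinner y z"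
    and cinner_scaleC_left: "cinner (scaleC a x) y = a * cinner x y"
    and cinner_commute: "cinner y x = cnj (cinner x y)"
    and cinner_self_norm: "cinner x x = complex_of_real ((norm x)\<^sup>2)"

definition bounded_op :: "('a::chilbert \<Rightarrow> 'a) \<Rightarrow> bool" where
  "bounded_op T \<longleftrightarrow> bounded_linear T \<and> (\<forall>a x. T (scaleC a x) = scaleC a (T x))"

definition adj :: "('a::chilbert \<Rightarrow> 'a) \<Rightarrow> ('a \<Rightarrow> 'a)" where
  "adj T = (THE S. \<forall>x y. cinner (T x) y = cinner x (S y))"

definition op_plus :: "('a::chilbert \<Rightarrow> 'a) \<Rightarrow> ('a \<Rightarrow> 'a) \<Rightarrow> ('a \<Rightarrow> 'a)" where
  "op_plus S T = (\<lambda>x. S x + T x)"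

definition abs_sq :: "('a::chilbert \<Rightarrow> 'a) \<Rightarrow> ('a \<Rightarrow> 'a)" where
  "abs_sq T = adj T \<circ> T"

definition abs_adj_sq :: "('a::chilbert \<Rightarrow> 'a) \<Rightarrow> ('a \<Rightarrow> 'a)" where
  "abs_adj_sq T = T \<circ> adj T"

text \<open>Numerical radius (sup over the unit sphere; 0 is inserted so that the value is 0
  on the trivial space; it does not change the supremum otherwise).\<close>
definition nrad :: "('a::chilbert \<Rightarrow> 'a) \<Rightarrow> real" where
  "nrad T = Sup (insert 0 ((\<lambda>x. cmod (cinner (T x) x)) ` {x. norm x = 1}))"

text \<open>Numerical radius of the operator matrix [[A,B],[C,D]] acting on H \<oplus> H, with the
  direct-sum inner product <(x1,x2),(y1,y2)> = <x1,y1> + <x2,y2> and norm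
  ||(x1,x2)||^2 = ||x1||^2 + ||x2||^2.\<close>
definition block_nrad :: "('a::chilbert \<Rightarrow> 'a) \<Rightarrow> ('a \<Rightarrow> 'a) \<Rightarrow> ('a \<Rightarrow> 'a) \<Rightarrow> ('a \<Rightarrow> 'a) \<Rightarrow> real" where
  "block_nrad A B C D = Sup (insert 0
     ((\<lambda>(x1, x2). cmod (cinner (A x1 + B x2) x1 + cinner (C x1 + D x2) x2))
        ` {(x1, x2). (norm x1)\<^sup>2 + (norm x2)\<^sup>2 = 1}))"

end

theory Submission imports Defs begin

text \<open>For a unit vector \<open>(x\<^sub>1, x\<^sub>2)\<close> of \<open>H \<oplus> H\<close> the quadratic form of the operator matrix splits
  into the diagonal part \<open>\<langle>A x\<^sub>1, x\<^sub>1\<rangle> + \<langle>D x\<^sub>2, x\<^sub>2\<rangle>\<close>, bounded by \<open>max (w A) (w D)\<close>, and the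
  off-diagonal part \<open>s = \<langle>B x\<^sub>2, x\<^sub>1\<rangle> + \<langle>C x\<^sub>1, x\<^sub>2\<rangle>\<close>. The latter is \<open>\<langle>a, e\<rangle> = \<langle>e, b\<rangle>\<close> for
  \<open>e = (x\<^sub>1, x\<^sub>2)\<close>, \<open>a = (B x\<^sub>2, C x\<^sub>1)\<close> and \<open>b = (C\<^sup>* x\<^sub>2, B\<^sup>* x\<^sub>1)\<close>, so Buzano's inequality gives
  \<open>2 |s|\<^sup>2 \<le> \<parallel>a\<parallel> \<parallel>b\<parallel> + |\<langle>a, b\<rangle>|\<close>. Here \<open>\<langle>a, b\<rangle> = \<langle>BC x\<^sub>1, x\<^sub>1\<rangle> + \<langle>CB x\<^sub>2, x\<^sub>2\<rangle>\<close> is controlled by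
  \<open>w(BC)\<close> and \<open>w(CB)\<close>, while \<open>\<parallel>a\<parallel>\<^sup>2 + \<parallel>b\<parallel>\<^sup>2\<close> and \<open>\<parallel>a\<parallel>\<^sup>4 + \<parallel>b\<parallel>\<^sup>4\<close> are controlled by the norms of
  \<open>|B|\<^sup>2 + |C\<^sup>*|\<^sup>2\<close>, \<open>|B\<^sup>*|\<^sup>2 + |C|\<^sup>2\<close> and of their fourth-power analogues. Squaring Buzano's bound,
  splitting \<open>|\<langle>a, b\<rangle>|\<^sup>2\<close> as an \<open>\<alpha>\<close>-convex combination of two of its upper bounds and using
  \<open>(m + t)\<^sup>4 \<le> 8 m\<^sup>4 + 8 t\<^sup>4\<close> yields the estimate. The adjoint, which the definitions only
  describe implicitly, is obtained from the Riesz representation theorem.\<close>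

section \<open>Complex inner product spaces\<close>

lemma cinner_add_right: "cinner x (y + z) = cinner x y + cinner x z"
  by (simp only: cinner_commute[of x "y + z"] cinner_add_left complex_cnj_add
      cinner_commute[of y x] cinner_commute[of z x] complex_cnj_cnj)

lemma cinner_scaleC_right: "cinner x (scaleC a y) = cnj a * cinner x y"
  by (simp only: cinner_commute[of x "scaleC a y"] cinner_scaleC_left complex_cnj_mult
      cinner_commute[of y x] complex_cnj_cnj)

lemma cinner_scaleR_left: "cinner (r *\<^sub>R x) y = complex_of_real r * cinner x y"
  by (simp add: scaleC_of_real[symmetric] cinner_scaleC_left)

lemma cinner_scaleR_right: "cinner x (r *\<^sub>R y) = complex_of_real r * cinner x y"
  by (simp add: scaleC_of_real[symmetric] cinner_scaleC_right)

lemma cinner_zero_right [simp]: "cinner x 0 = 0"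
  using cinner_scaleR_right[of x 0 0] by simp

lemma cinner_diff_left: "cinner (x - y) z = cinner x z - cinner y z"
  using cinner_add_left[of "x - y" y z] by simp

lemma cinner_diff_right: "cinner x (y - z) = cinner x y - cinner x z"
  using cinner_add_right[of x "y - z" z] by simp

lemma cinner_eq_zero_iff: "cinner x x = 0 \<longleftrightarrow> x = 0"
  by (simp add: cinner_self_norm)

lemma cinner_eqI:
  assumes "\<And>z. cinner z x = cinner z y"
  shows "x = y"
proof -
  have "cinner (x - y) (x - y) = 0" using assms[of "x - y"] by (simp add: cinner_diff_right)
  then show ?thesis by (simp add: cinner_eq_zero_iff)
qed

lemma norm_diff_projection_sq:
  assumes "y \<noteq> 0"
  shows "(norm (x - scaleC (cinner x y / complex_of_real ((norm y)\<^sup>2)) y))\<^sup>2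
        = (norm x)\<^sup>2 - (cmod (cinner x y))\<^sup>2 / (norm y)\<^sup>2"
proof -
  define \<nu> where "\<nu> = (norm y)\<^sup>2"
  define c where "c = cinner x y"
  define t where "t = c / complex_of_real \<nu>"
  have "\<nu> > 0" using assms by (simp add: \<nu>_def)
  have "cinner (x - scaleC t y) (x - scaleC t y)
      = cinner x x - cnj t * c - t * cnj c + t * cnj t * cinner y y"
    by (simp add: cinner_diff_left cinner_diff_right cinner_scaleC_left cinner_scaleC_right
        c_def cinner_commute[of y x] algebra_simps)
  also have "\<dots> = complex_of_real ((norm x)\<^sup>2) - cnj t * c - t * cnj c + t * cnj t * complex_of_real \<nu>"
    by (simp add: cinner_self_norm \<nu>_def)
  also have "\<dots> = complex_of_real ((norm x)\<^sup>2 - (cmod c)\<^sup>2 / \<nu>)"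
    using \<open>\<nu> > 0\<close> by (simp add: t_def field_simps flip: complex_norm_square)
  finally have "complex_of_real ((norm (x - scaleC t y))\<^sup>2) = complex_of_real ((norm x)\<^sup>2 - (cmod c)\<^sup>2 / \<nu>)"
    by (simp add: cinner_self_norm)
  then show ?thesis unfolding t_def c_def \<nu>_def by (simp only: of_real_eq_iff)
qed

lemma cinner_Cauchy_Schwarz: "cmod (cinner x y) \<le> norm x * norm y"
proof (cases "y = 0")
  case False
  have "(cmod (cinner x y))\<^sup>2 / (norm y)\<^sup>2 \<le> (norm x)\<^sup>2"
    using norm_diff_projection_sq[OF False, of x] by (metis diff_ge_0_iff_ge zero_le_power2)
  then have "(cmod (cinner x y))\<^sup>2 \<le> (norm x * norm y)\<^sup>2"
    using False by (simp add: field_simps power_mult_distrib)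
  then show ?thesis by (rule power2_le_imp_le) simp
qed simp

text \<open>Reflecting \<open>a\<close> in the line through \<open>e\<close> preserves its norm; Cauchy--Schwarz for the
  reflected vector \<open>2 \<langle>a, e\<rangle> e - a\<close> and \<open>b\<close> is the inequality.\<close>

lemma Buzano_inequality:
  assumes "norm e = 1"
  shows "2 * cmod (cinner a e * cinner e b) \<le> norm a * norm b + cmod (cinner a b)"
proof -
  define c where "c = cinner a e"
  define u where "u = scaleC (2 * c) e - a"
  have "cinner e e = 1" using assms by (simp add: cinner_self_norm)
  then have "cinner u u = cinner a a"
    by (simp add: u_def c_def cinner_diff_left cinner_diff_right cinner_scaleC_left
        cinner_scaleC_right cinner_commute[of e a] algebra_simps)
  then have "norm u = norm a"
    by (metis cinner_self_norm norm_ge_zero of_real_eq_iff power2_eq_imp_eq)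
  moreover have "cinner u b = 2 * (c * cinner e b) - cinner a b"
    by (simp add: u_def cinner_diff_left cinner_scaleC_left)
  ultimately have "cmod (2 * (c * cinner e b) - cinner a b) \<le> norm a * norm b"
    using cinner_Cauchy_Schwarz[of u b] by simp
  then show ?thesis
    using norm_triangle_ineq[of "2 * (c * cinner e b) - cinner a b" "cinner a b"]
    by (simp add: c_def norm_mult)
qed

instantiation prod :: (chilbert, chilbert) chilbert
begin

definition scaleC_prod :: "complex \<Rightarrow> 'a \<times> 'b \<Rightarrow> 'a \<times> 'b" where
  "scaleC_prod a x = (scaleC a (fst x), scaleC a (snd x))"

definition cinner_prod :: "'a \<times> 'b \<Rightarrow> 'a \<times> 'b \<Rightarrow> complex" where
  "cinner_prod x y = cinner (fst x) (fst y) + cinner (snd x) (snd y)"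

instance proof
  fix r :: real and x y z :: "'a \<times> 'b" and a b :: complex
  show "scaleC (complex_of_real r) x = r *\<^sub>R x"
    by (simp add: scaleC_prod_def scaleC_of_real prod_eq_iff)
  show "scaleC a (x + y) = scaleC a x + scaleC a y"
    by (simp add: scaleC_prod_def scaleC_add_right)
  show "scaleC (a + b) x = scaleC a x + scaleC b x"
    by (simp add: scaleC_prod_def scaleC_add_left)
  show "scaleC a (scaleC b x) = scaleC (a * b) x"
    by (simp add: scaleC_prod_def scaleC_scaleC)
  show "scaleC 1 x = x"
    by (simp add: scaleC_prod_def scaleC_one)
  show "cinner (x + y) z = cinner x z + cinner y z"
    by (simp add: cinner_prod_def cinner_add_left)
  show "cinner (scaleC a x) y = a * cinner x y"
    by (simp add: cinner_prod_def scaleC_prod_def cinner_scaleC_left algebra_simps)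
  show "cinner y x = cnj (cinner x y)"
    by (simp add: cinner_prod_def cinner_commute[of "fst y"] cinner_commute[of "snd y"])
  show "cinner x x = complex_of_real ((norm x)\<^sup>2)"
    by (cases x) (simp add: cinner_prod_def cinner_self_norm norm_Pair)
qed

end

lemma cinner_Pair: "cinner (a, b) (c, d) = cinner a c + cinner b d"
  by (simp add: cinner_prod_def)

lemma norm_Pair_sq: "(norm (a, b))\<^sup>2 = (norm a)\<^sup>2 + (norm b)\<^sup>2"
  by (simp add: norm_Pair)

section \<open>The Riesz representation theorem\<close>

lemma parallelogram_law:
  fixes u v :: "'a::chilbert"
  shows "(norm (u + v))\<^sup>2 + (norm (u - v))\<^sup>2 = 2 * (norm u)\<^sup>2 + 2 * (norm v)\<^sup>2"
proof -
  have "cinner (u + v) (u + v) + cinner (u - v) (u - v) = 2 * cinner u u + 2 * cinner v v"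
    by (simp add: cinner_add_left cinner_add_right cinner_diff_left cinner_diff_right algebra_simps)
  then have "complex_of_real ((norm (u + v))\<^sup>2 + (norm (u - v))\<^sup>2)
      = complex_of_real (2 * (norm u)\<^sup>2 + 2 * (norm v)\<^sup>2)"
    by (simp add: cinner_self_norm)
  then show ?thesis by (simp only: of_real_eq_iff)
qed

lemma minimizing_sequence_Cauchy:
  fixes x :: "'a::chilbert"
  assumes "convex N" and n_in: "\<And>k. n k \<in> N" and d_le: "\<And>q. q \<in> N \<Longrightarrow> d \<le> norm (x - q)"
    and lim: "(\<lambda>k. norm (x - n k)) \<longlonglongrightarrow> d"
  shows "Cauchy n"
proof (rule CauchyI)
  fix \<epsilon> :: real
  assume "0 < \<epsilon>"
  have "0 \<le> d" using lim by (rule LIMSEQ_le_const) simp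
  define \<delta> where "\<delta> k = (norm (x - n k))\<^sup>2 - d\<^sup>2" for k
  have "\<delta> \<longlonglongrightarrow> d\<^sup>2 - d\<^sup>2" unfolding \<delta>_def by (intro tendsto_intros lim)
  then obtain M where M: "\<And>k. k \<ge> M \<Longrightarrow> \<bar>\<delta> k\<bar> < \<epsilon>\<^sup>2 / 4"
    using LIMSEQ_D[of \<delta> 0 "\<epsilon>\<^sup>2 / 4"] \<open>0 < \<epsilon>\<close> by auto
  have diff_bound: "(norm (n j - n k))\<^sup>2 \<le> 2 * \<delta> j + 2 * \<delta> k" for j k
  proof -
    define m where "m = (1/2) *\<^sub>R (n j + n k)"
    have "m \<in> N"
      using convexD[OF \<open>convex N\<close> n_in[of j] n_in[of k], of "1/2" "1/2"] by (simp add: m_def scaleR_right_distrib)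
    have "(x - n j) + (x - n k) = 2 *\<^sub>R (x - m)" by (simp add: m_def algebra_simps scaleR_2)
    then have "norm ((x - n j) + (x - n k)) = 2 * norm (x - m)" by simp
    with d_le[OF \<open>m \<in> N\<close>] \<open>0 \<le> d\<close> have "4 * d\<^sup>2 \<le> (norm ((x - n j) + (x - n k)))\<^sup>2"
      by (simp add: power2_eq_square mult_mono)
    then show ?thesis
      using parallelogram_law[of "x - n j" "x - n k"] by (simp add: \<delta>_def norm_minus_commute)
  qed
  have "norm (n j - n k) < \<epsilon>" if "j \<ge> M" "k \<ge> M" for j k
  proof (rule power_less_imp_less_base)
    show "(norm (n j - n k))\<^sup>2 < \<epsilon>\<^sup>2"
      using M[OF that(1)] M[OF that(2)] diff_bound[of j k] by linarith
  qed (use \<open>0 < \<epsilon>\<close> in simp)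
  then show "\<exists>M. \<forall>j\<ge>M. \<forall>k\<ge>M. norm (n j - n k) < \<epsilon>" by blast
qed

lemma nearest_point_exists:
  fixes x :: "'a::chilbert"
  assumes "closed N" "convex N" "N \<noteq> {}"
  shows "\<exists>p\<in>N. \<forall>q\<in>N. norm (x - p) \<le> norm (x - q)"
proof -
  define d where "d = infdist x N"
  have "\<exists>a\<in>N. dist x a < d + inverse (real (Suc k))" for k
  proof -
    have "bdd_below (dist x ` N)" by (rule bdd_belowI[of _ 0]) auto
    moreover have "infdist x N < d + inverse (real (Suc k))" by (simp add: d_def)
    ultimately show ?thesis using \<open>N \<noteq> {}\<close> by (auto simp: infdist_notempty cINF_less_iff)
  qed
  then obtain n where n_in: "\<And>k. n k \<in> N"
    and n_close: "\<And>k. dist x (n k) < d + inverse (real (Suc k))"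
    by metis
  have d_le: "d \<le> norm (x - q)" if "q \<in> N" for q
    using infdist_le[OF that, of x] by (simp add: d_def dist_norm)
  have upper: "norm (x - n k) \<le> d + inverse (real (Suc k))" for k
    using n_close[of k] unfolding dist_norm by linarith
  have lim: "(\<lambda>k. norm (x - n k)) \<longlonglongrightarrow> d"
  proof (rule tendsto_sandwich[of "\<lambda>_. d" _ _ "\<lambda>k. d + inverse (real (Suc k))"])
    show "\<forall>\<^sub>F k in sequentially. d \<le> norm (x - n k)" using d_le[OF n_in] by simp
    show "\<forall>\<^sub>F k in sequentially. norm (x - n k) \<le> d + inverse (real (Suc k))" using upper by simp
  qed (rule tendsto_const LIMSEQ_inverse_real_of_nat_add)+
  have "Cauchy n" using \<open>convex N\<close> n_in d_le lim by (rule minimizing_sequence_Cauchy)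
  then obtain p where "n \<longlonglongrightarrow> p" by (auto simp: Cauchy_convergent_iff convergent_def)
  have "(\<lambda>k. norm (x - n k)) \<longlonglongrightarrow> norm (x - p)" using \<open>n \<longlonglongrightarrow> p\<close> by (intro tendsto_intros)
  with lim have "d = norm (x - p)" by (rule LIMSEQ_unique)
  show ?thesis
  proof (intro bexI[of _ p] ballI)
    show "norm (x - p) \<le> norm (x - q)" if "q \<in> N" for q
      using d_le[OF that] \<open>d = norm (x - p)\<close> by simp
  qed (rule closed_sequentially[OF \<open>closed N\<close> n_in \<open>n \<longlonglongrightarrow> p\<close>])
qed

lemma nearest_point_orthogonal:
  assumes nearest: "\<And>q. q \<in> N \<Longrightarrow> norm w \<le> norm (w - q)"
    and scaleC_in: "\<And>c q. q \<in> N \<Longrightarrow> scaleC c q \<in> N" and "q \<in> N"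
  shows "cinner w q = 0"
proof (cases "q = 0")
  case False
  let ?c = "cinner w q / complex_of_real ((norm q)\<^sup>2)"
  have "(norm w)\<^sup>2 \<le> (norm (w - scaleC ?c q))\<^sup>2"
    by (rule power_mono[OF nearest[OF scaleC_in[OF \<open>q \<in> N\<close>]]]) simp
  then have "(cmod (cinner w q))\<^sup>2 / (norm q)\<^sup>2 \<le> 0"
    using norm_diff_projection_sq[OF False, of w] by linarith
  then show ?thesis using False by (simp add: divide_le_0_iff)
qed simp

lemma representation_by_kernel_orthogonal:
  fixes f :: "'a::chilbert \<Rightarrow> complex"
  assumes add: "\<And>x y. f (x + y) = f x + f y"
    and scaleC: "\<And>c x. f (scaleC c x) = c * f x"
    and "f w \<noteq> 0" and orth: "\<And>q. f q = 0 \<Longrightarrow> cinner w q = 0"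
  shows "f x = cinner x (scaleC (cnj (f w) / complex_of_real ((norm w)\<^sup>2)) w)"
proof -
  have f_diff: "f (x - y) = f x - f y" for x y using add[of "x - y" y] by simp
  have "w \<noteq> 0" using \<open>f w \<noteq> 0\<close> add[of 0 0] by auto
  define c where "c = f x / f w"
  have "f (x - scaleC c w) = 0" using \<open>f w \<noteq> 0\<close> by (simp add: c_def f_diff scaleC)
  then have "cinner (x - scaleC c w) w = 0"
    using orth cinner_commute[of w "x - scaleC c w"] by simp
  then have "cinner x w = c * complex_of_real ((norm w)\<^sup>2)"
    by (simp add: cinner_diff_left cinner_scaleC_left cinner_self_norm)
  then show ?thesis
    using \<open>w \<noteq> 0\<close> \<open>f w \<noteq> 0\<close> by (simp add: cinner_scaleC_right c_def field_simps)
qed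

theorem Riesz_representation:
  fixes f :: "'a::chilbert \<Rightarrow> complex"
  assumes add: "\<And>x y. f (x + y) = f x + f y"
    and scaleC: "\<And>c x. f (scaleC c x) = c * f x"
    and bounded: "\<And>x. cmod (f x) \<le> K * norm x"
  shows "\<exists>z. \<forall>x. f x = cinner x z"
proof (cases "\<forall>x. f x = 0")
  case True
  then show ?thesis by (intro exI[of _ 0]) simp
next
  case False
  then obtain x0 where "f x0 \<noteq> 0" by blast
  have "bounded_linear f"
  proof (rule bounded_linear_intro[where K=K])
    show "f (r *\<^sub>R x) = r *\<^sub>R f x" for r x
      using scaleC[of "complex_of_real r" x] by (simp add: scaleC_of_real scaleR_conv_of_real)
  qed (simp_all add: add bounded mult.commute)
  define N where "N = {x. f x = 0}"
  have "closed N" unfolding N_def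
    by (rule closed_Collect_eq) (auto intro: linear_continuous_on \<open>bounded_linear f\<close>)
  moreover have "convex N" unfolding N_def
    by (intro subspace_imp_convex linear_subspace_kernel bounded_linear.linear[OF \<open>bounded_linear f\<close>])
  moreover have "0 \<in> N" using \<open>bounded_linear f\<close> by (simp add: N_def linear_simps)
  ultimately obtain p where "p \<in> N" and p_nearest: "\<And>q. q \<in> N \<Longrightarrow> norm (x0 - p) \<le> norm (x0 - q)"
    using nearest_point_exists[of N x0] by blast
  have "f (x0 - p) \<noteq> 0"
    using \<open>p \<in> N\<close> \<open>bounded_linear f\<close> \<open>f x0 \<noteq> 0\<close> by (simp add: N_def linear_simps)
  moreover have "cinner (x0 - p) q = 0" if "f q = 0" for q
  proof (rule nearest_point_orthogonal[of N])
    show "norm (x0 - p) \<le> norm (x0 - p - q)" if "q \<in> N" for q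
      using p_nearest[of "p + q"] that \<open>p \<in> N\<close> by (simp add: N_def add diff_diff_eq)
    show "scaleC c q \<in> N" if "q \<in> N" for c q using that by (simp add: N_def scaleC)
  qed (simp add: N_def that)
  ultimately show ?thesis using representation_by_kernel_orthogonal[OF add scaleC] by blast
qed

section \<open>Adjoints and absolute values\<close>

lemma cinner_adj:
  fixes T :: "'a::chilbert \<Rightarrow> 'a"
  assumes "bounded_op T"
  shows "cinner (T x) y = cinner x (adj T y)"
proof -
  interpret T: bounded_linear T using assms by (simp add: bounded_op_def)
  obtain K where K: "\<And>x. norm (T x) \<le> norm x * K" using T.bounded by blast
  have "\<exists>z. \<forall>x. cinner (T x) y = cinner x z" for y
  proof (rule Riesz_representation[where K="K * norm y"])
    show "cinner (T (scaleC c x)) y = c * cinner (T x) y" for c x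
      using assms by (simp add: bounded_op_def cinner_scaleC_left)
    show "cmod (cinner (T x) y) \<le> K * norm y * norm x" for x
    proof -
      have "cmod (cinner (T x) y) \<le> norm (T x) * norm y" by (rule cinner_Cauchy_Schwarz)
      also have "\<dots> \<le> norm x * K * norm y" using K[of x] by (simp add: mult_right_mono)
      finally show ?thesis by (simp add: algebra_simps)
    qed
  qed (simp add: T.add cinner_add_left)
  then obtain S where "\<forall>x y. cinner (T x) y = cinner x (S y)" by metis
  moreover have "S' = S" if "\<forall>x y. cinner (T x) y = cinner x (S' y)" for S'
    using that \<open>\<forall>x y. cinner (T x) y = cinner x (S y)\<close> by (intro ext cinner_eqI) metis
  ultimately have "\<forall>x y. cinner (T x) y = cinner x (adj T y)"
    unfolding adj_def by (rule theI)
  then show ?thesis by blast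
qed

lemma bounded_linear_adj:
  fixes T :: "'a::chilbert \<Rightarrow> 'a"
  assumes "bounded_op T"
  shows "bounded_linear (adj T)"
proof -
  interpret T: bounded_linear T using assms by (simp add: bounded_op_def)
  obtain K where K: "\<And>x. norm (T x) \<le> norm x * K" and "K > 0" using T.pos_bounded by blast
  note adj = cinner_adj[OF assms]
  show ?thesis
  proof (rule bounded_linear_intro[where K=K])
    show "adj T (x + y) = adj T x + adj T y" for x y
      by (rule cinner_eqI) (simp add: adj[symmetric] cinner_add_right)
    show "adj T (r *\<^sub>R x) = r *\<^sub>R adj T x" for r x
      by (rule cinner_eqI) (simp add: adj[symmetric] cinner_scaleR_right)
    show "norm (adj T y) \<le> norm y * K" for y
    proof -
      have "(norm (adj T y))\<^sup>2 = Re (cinner (T (adj T y)) y)" by (simp add: adj cinner_self_norm)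
      also have "\<dots> \<le> norm (T (adj T y)) * norm y"
        using complex_Re_le_cmod cinner_Cauchy_Schwarz order.trans by blast
      also have "\<dots> \<le> norm (adj T y) * K * norm y" using K by (simp add: mult_right_mono)
      finally have "norm (adj T y) * norm (adj T y) \<le> norm (adj T y) * (norm y * K)"
        by (simp add: power2_eq_square algebra_simps)
      then show ?thesis
        using \<open>K > 0\<close> by (cases "adj T y = 0") (simp_all add: mult_le_cancel_left)
    qed
  qed
qed

lemma bounded_linear_comp: "bounded_linear f \<Longrightarrow> bounded_linear g \<Longrightarrow> bounded_linear (f \<circ> g)"
  unfolding comp_def by (rule bounded_linear_compose)

lemma bounded_linear_abs_sq: "bounded_op T \<Longrightarrow> bounded_linear (abs_sq T)"
  using bounded_linear_adj[of T] by (simp add: abs_sq_def bounded_op_def bounded_linear_comp)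

lemma bounded_linear_abs_adj_sq: "bounded_op T \<Longrightarrow> bounded_linear (abs_adj_sq T)"
  using bounded_linear_adj[of T] by (simp add: abs_adj_sq_def bounded_op_def bounded_linear_comp)

lemma cinner_abs_sq: "bounded_op T \<Longrightarrow> cinner (abs_sq T x) y = cinner (T x) (T y)"
  by (simp add: abs_sq_def cinner_commute[of "adj T (T x)" y] cinner_commute[of "T x" "T y"]
      cinner_adj[symmetric])

lemma cinner_abs_adj_sq: "bounded_op T \<Longrightarrow> cinner (abs_adj_sq T x) y = cinner (adj T x) (adj T y)"
  by (simp add: abs_adj_sq_def cinner_adj)

lemma cinner_square_selfadjoint:
  assumes "\<And>u v. cinner (P u) v = cinner u (P v)"
  shows "cinner ((P \<circ> P) x) x = complex_of_real ((norm (P x))\<^sup>2)"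
  using assms[of "P x" x] by (simp add: cinner_self_norm)

lemma cinner_abs_sq_square:
  assumes "bounded_op T"
  shows "cinner ((abs_sq T \<circ> abs_sq T) x) x = complex_of_real ((norm (abs_sq T x))\<^sup>2)"
proof (rule cinner_square_selfadjoint)
  show "cinner (abs_sq T u) v = cinner u (abs_sq T v)" for u v
    by (simp add: cinner_abs_sq[OF assms] cinner_commute[of u "abs_sq T v"]
        cinner_commute[of "T v" "T u"])
qed

lemma cinner_abs_adj_sq_square:
  assumes "bounded_op T"
  shows "cinner ((abs_adj_sq T \<circ> abs_adj_sq T) x) x = complex_of_real ((norm (abs_adj_sq T x))\<^sup>2)"
proof (rule cinner_square_selfadjoint)
  show "cinner (abs_adj_sq T u) v = cinner u (abs_adj_sq T v)" for u v
    by (simp add: cinner_abs_adj_sq[OF assms] cinner_commute[of u "abs_adj_sq T v"]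
        cinner_commute[of "adj T v" "adj T u"])
qed

section \<open>Quadratic forms, numerical radius and operator norm\<close>

lemma bdd_above_numerical_range:
  fixes T :: "'a::chilbert \<Rightarrow> 'a"
  assumes "bounded_linear T"
  shows "bdd_above (insert 0 ((\<lambda>x. cmod (cinner (T x) x)) ` {x. norm x = 1}))"
proof (rule bdd_aboveI[of _ "onorm T"])
  fix v assume "v \<in> insert 0 ((\<lambda>x. cmod (cinner (T x) x)) ` {x. norm x = 1})"
  then consider "v = 0" | u where "norm u = 1" "v = cmod (cinner (T u) u)" by blast
  then show "v \<le> onorm T"
  proof cases
    case 1
    then show ?thesis using onorm_pos_le[OF assms] by simp
  next
    case 2
    then have "v \<le> norm (T u) * norm u" using cinner_Cauchy_Schwarz[of "T u" u] by simp
    also have "\<dots> \<le> onorm T" using onorm[OF assms, of u] \<open>norm u = 1\<close> by simp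
    finally show ?thesis .
  qed
qed

lemma nrad_nonneg: "bounded_linear T \<Longrightarrow> 0 \<le> nrad T"
  unfolding nrad_def by (rule cSup_upper[OF _ bdd_above_numerical_range]) simp_all

lemma cmod_cinner_le_nrad:
  fixes T :: "'a::chilbert \<Rightarrow> 'a"
  assumes "bounded_linear T"
  shows "cmod (cinner (T x) x) \<le> nrad T * (norm x)\<^sup>2"
proof (cases "x = 0")
  case True
  then show ?thesis using assms by (simp add: linear_simps)
next
  case False
  interpret T: bounded_linear T by fact
  define u where "u = (1 / norm x) *\<^sub>R x"
  have "cinner (T u) u = complex_of_real (1 / norm x) * (complex_of_real (1 / norm x) * cinner (T x) x)"
    by (simp add: u_def T.scaleR cinner_scaleR_left cinner_scaleR_right)
  then have "cmod (cinner (T u) u) = cmod (cinner (T x) x) / (norm x)\<^sup>2"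
    using False by (simp add: norm_mult norm_divide power2_eq_square)
  moreover have "cmod (cinner (T u) u) \<le> nrad T"
    unfolding nrad_def using False
    by (intro cSup_upper[OF _ bdd_above_numerical_range[OF assms]]) (simp add: u_def)
  ultimately show ?thesis using False by (simp add: divide_le_eq)
qed

lemma Re_cinner_le_onorm:
  fixes T :: "'a::chilbert \<Rightarrow> 'a"
  assumes "bounded_linear T"
  shows "Re (cinner (T x) x) \<le> onorm T * (norm x)\<^sup>2"
proof -
  have "Re (cinner (T x) x) \<le> norm (T x) * norm x"
    using complex_Re_le_cmod cinner_Cauchy_Schwarz order.trans by blast
  also have "\<dots> \<le> onorm T * norm x * norm x" using onorm[OF assms] by (simp add: mult_right_mono)
  finally show ?thesis by (simp add: power2_eq_square)
qed

lemma bounded_linear_op_plus: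
  "bounded_linear P \<Longrightarrow> bounded_linear Q \<Longrightarrow> bounded_linear (op_plus P Q)"
  unfolding op_plus_def by (rule bounded_linear_add)

lemma norm_sq_add_le_onorm_op_plus:
  fixes P Q :: "'a::chilbert \<Rightarrow> 'a"
  assumes "bounded_linear P" "bounded_linear Q"
    and "cinner (P x) x = complex_of_real ((norm u)\<^sup>2)"
    and "cinner (Q x) x = complex_of_real ((norm v)\<^sup>2)"
  shows "(norm u)\<^sup>2 + (norm v)\<^sup>2 \<le> onorm (op_plus P Q) * (norm x)\<^sup>2"
  using Re_cinner_le_onorm[OF bounded_linear_op_plus[OF assms(1,2)], of x] assms(3,4)
  by (simp add: op_plus_def cinner_add_left)

lemma add_le_max_convex:
  fixes a b u v s t :: real
  assumes "a \<le> u * s" "b \<le> v * t" "0 \<le> s" "0 \<le> t" "s + t = 1"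
  shows "a + b \<le> max u v"
proof -
  have "u * s + v * t \<le> max u v * s + max u v * t"
    using assms(3,4) by (intro add_mono mult_right_mono) auto
  then show ?thesis using assms(1,2,5) by (simp add: distrib_left[symmetric])
qed

section \<open>The estimate for a single unit vector\<close>

lemma off_diagonal_Buzano:
  assumes "bounded_op B" "bounded_op C" "(norm x1)\<^sup>2 + (norm x2)\<^sup>2 = 1"
  shows "2 * (cmod (cinner (B x2) x1 + cinner (C x1) x2))\<^sup>2
    \<le> norm (B x2, C x1) * norm (adj C x2, adj B x1)
      + cmod (cinner (B x2, C x1) (adj C x2, adj B x1))"
proof -
  have "norm (x1, x2) = 1" using assms(3) by (simp add: norm_Pair)
  then show ?thesis
    using Buzano_inequality[of "(x1, x2)" "(B x2, C x1)" "(adj C x2, adj B x1)"]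
    by (simp add: cinner_Pair cinner_adj[OF assms(1)] cinner_adj[OF assms(2)] norm_mult
        power2_eq_square add.commute)
qed

lemma off_diagonal_cinner_le_nrad:
  assumes "bounded_op B" "bounded_op C" "(norm x1)\<^sup>2 + (norm x2)\<^sup>2 = 1"
  shows "cmod (cinner (B x2, C x1) (adj C x2, adj B x1)) \<le> max (nrad (B \<circ> C)) (nrad (C \<circ> B))"
proof -
  have bl: "bounded_linear (B \<circ> C)" "bounded_linear (C \<circ> B)"
    using assms(1,2) by (simp_all add: bounded_op_def bounded_linear_comp)
  have "cinner (B x2, C x1) (adj C x2, adj B x1) = cinner ((B \<circ> C) x1) x1 + cinner ((C \<circ> B) x2) x2"
    by (simp add: cinner_Pair cinner_adj[OF assms(1)] cinner_adj[OF assms(2)] add.commute)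
  then have "cmod (cinner (B x2, C x1) (adj C x2, adj B x1))
      \<le> cmod (cinner ((B \<circ> C) x1) x1) + cmod (cinner ((C \<circ> B) x2) x2)"
    by (simp add: norm_triangle_ineq)
  also have "\<dots> \<le> max (nrad (B \<circ> C)) (nrad (C \<circ> B))"
    using cmod_cinner_le_nrad[OF bl(1), of x1] cmod_cinner_le_nrad[OF bl(2), of x2]
    by (rule add_le_max_convex) (use assms(3) in auto)
  finally show ?thesis .
qed

lemma off_diagonal_norm_sq:
  assumes "bounded_op B" "bounded_op C" "(norm x1)\<^sup>2 + (norm x2)\<^sup>2 = 1"
  shows "(norm (B x2, C x1))\<^sup>2 + (norm (adj C x2, adj B x1))\<^sup>2
    \<le> max (onorm (op_plus (abs_sq B) (abs_adj_sq C))) (onorm (op_plus (abs_adj_sq B) (abs_sq C)))"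
proof -
  have "(norm (B x2))\<^sup>2 + (norm (adj C x2))\<^sup>2
      \<le> onorm (op_plus (abs_sq B) (abs_adj_sq C)) * (norm x2)\<^sup>2"
    by (intro norm_sq_add_le_onorm_op_plus bounded_linear_abs_sq bounded_linear_abs_adj_sq assms(1,2))
       (simp_all add: cinner_abs_sq cinner_abs_adj_sq cinner_self_norm assms(1,2))
  moreover have "(norm (adj B x1))\<^sup>2 + (norm (C x1))\<^sup>2
      \<le> onorm (op_plus (abs_adj_sq B) (abs_sq C)) * (norm x1)\<^sup>2"
    by (intro norm_sq_add_le_onorm_op_plus bounded_linear_abs_sq bounded_linear_abs_adj_sq assms(1,2))
       (simp_all add: cinner_abs_sq cinner_abs_adj_sq cinner_self_norm assms(1,2))
  ultimately have "((norm (B x2))\<^sup>2 + (norm (adj C x2))\<^sup>2) + ((norm (adj B x1))\<^sup>2 + (norm (C x1))\<^sup>2)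
      \<le> max (onorm (op_plus (abs_sq B) (abs_adj_sq C))) (onorm (op_plus (abs_adj_sq B) (abs_sq C)))"
    by (rule add_le_max_convex) (use assms(3) in auto)
  then show ?thesis unfolding norm_Pair_sq by linarith
qed

lemma power4_le_square_of_square_le:
  fixes a b :: real
  assumes "0 \<le> a" "a\<^sup>2 \<le> b"
  shows "a ^ 4 \<le> b\<^sup>2"
  using power_mono[OF assms(2), of 2] assms(1) by (simp add: power4_eq_xxxx power2_eq_square mult.assoc)

text \<open>The fourth powers are reduced to the squares of \<open>|B|\<^sup>2\<close>, \<open>|C|\<^sup>2\<close>, \<open>|B\<^sup>*|\<^sup>2\<close>, \<open>|C\<^sup>*|\<^sup>2\<close>
  by writing \<open>\<parallel>B x\<^sub>2\<parallel>\<^sup>2 + \<parallel>C x\<^sub>1\<parallel>\<^sup>2 = \<langle>(|C|\<^sup>2 x\<^sub>1, |B|\<^sup>2 x\<^sub>2), (x\<^sub>1, x\<^sub>2)\<rangle>\<close> and applying Cauchy--Schwarz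
  in \<open>H \<oplus> H\<close>.\<close>

lemma off_diagonal_norm_pow4:
  assumes "bounded_op B" "bounded_op C" "(norm x1)\<^sup>2 + (norm x2)\<^sup>2 = 1"
  shows "(norm (B x2, C x1))^4 + (norm (adj C x2, adj B x1))^4
    \<le> max (onorm (op_plus (abs_sq B \<circ> abs_sq B) (abs_adj_sq C \<circ> abs_adj_sq C)))
          (onorm (op_plus (abs_adj_sq B \<circ> abs_adj_sq B) (abs_sq C \<circ> abs_sq C)))"
proof -
  have Re_le: "Re (cinner v (x1, x2)) \<le> norm v" for v
    using complex_Re_le_cmod[of "cinner v (x1, x2)"] cinner_Cauchy_Schwarz[of v "(x1, x2)"] assms(3)
    by (simp add: norm_Pair)
  have "(norm (B x2, C x1))\<^sup>2 = Re (cinner (abs_sq C x1, abs_sq B x2) (x1, x2))"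
    by (simp add: cinner_Pair cinner_abs_sq assms(1,2) cinner_self_norm norm_Pair_sq add.commute)
  then have "(norm (B x2, C x1))^4 \<le> (norm (abs_sq C x1, abs_sq B x2))\<^sup>2"
    by (intro power4_le_square_of_square_le) (simp_all add: Re_le)
  moreover have "(norm (adj C x2, adj B x1))\<^sup>2 = Re (cinner (abs_adj_sq B x1, abs_adj_sq C x2) (x1, x2))"
    by (simp add: cinner_Pair cinner_abs_adj_sq assms(1,2) cinner_self_norm norm_Pair_sq add.commute)
  then have "(norm (adj C x2, adj B x1))^4 \<le> (norm (abs_adj_sq B x1, abs_adj_sq C x2))\<^sup>2"
    by (intro power4_le_square_of_square_le) (simp_all add: Re_le)
  moreover have "(norm (abs_sq B x2))\<^sup>2 + (norm (abs_adj_sq C x2))\<^sup>2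
      \<le> onorm (op_plus (abs_sq B \<circ> abs_sq B) (abs_adj_sq C \<circ> abs_adj_sq C)) * (norm x2)\<^sup>2"
    and "(norm (abs_adj_sq B x1))\<^sup>2 + (norm (abs_sq C x1))\<^sup>2
      \<le> onorm (op_plus (abs_adj_sq B \<circ> abs_adj_sq B) (abs_sq C \<circ> abs_sq C)) * (norm x1)\<^sup>2"
    by (intro norm_sq_add_le_onorm_op_plus bounded_linear_comp bounded_linear_abs_sq
        bounded_linear_abs_adj_sq cinner_abs_sq_square cinner_abs_adj_sq_square assms(1,2))+
  then have "((norm (abs_sq B x2))\<^sup>2 + (norm (abs_adj_sq C x2))\<^sup>2)
      + ((norm (abs_adj_sq B x1))\<^sup>2 + (norm (abs_sq C x1))\<^sup>2)
      \<le> max (onorm (op_plus (abs_sq B \<circ> abs_sq B) (abs_adj_sq C \<circ> abs_adj_sq C)))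
          (onorm (op_plus (abs_adj_sq B \<circ> abs_adj_sq B) (abs_sq C \<circ> abs_sq C)))"
    by (rule add_le_max_convex) (use assms(3) in auto)
  ultimately show ?thesis unfolding norm_Pair_sq by linarith
qed

lemma diagonal_le_nrad:
  assumes "bounded_linear A" "bounded_linear D" "(norm x1)\<^sup>2 + (norm x2)\<^sup>2 = 1"
  shows "cmod (cinner (A x1) x1 + cinner (D x2) x2) \<le> max (nrad A) (nrad D)"
proof -
  have "cmod (cinner (A x1) x1 + cinner (D x2) x2) \<le> cmod (cinner (A x1) x1) + cmod (cinner (D x2) x2)"
    by (rule norm_triangle_ineq)
  also have "\<dots> \<le> max (nrad A) (nrad D)"
    using cmod_cinner_le_nrad[OF assms(1), of x1] cmod_cinner_le_nrad[OF assms(2), of x2]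
    by (rule add_le_max_convex) (use assms(3) in auto)
  finally show ?thesis .
qed

lemma power4_add_le:
  fixes m t :: real
  shows "(m + t)^4 \<le> 8 * m^4 + 8 * t^4"
proof -
  have "(m + t)\<^sup>2 \<le> 2 * (m\<^sup>2 + t\<^sup>2)"
    using zero_le_power2[of "m - t"] by (simp add: power2_eq_square algebra_simps)
  then have "((m + t)\<^sup>2)\<^sup>2 \<le> (2 * (m\<^sup>2 + t\<^sup>2))\<^sup>2" by (rule power_mono) simp
  also have "\<dots> = 8 * m^4 + 8 * t^4 - 4 * (m\<^sup>2 - t\<^sup>2)\<^sup>2"
    by (simp add: power2_eq_square power4_eq_xxxx algebra_simps)
  also have "\<dots> \<le> 8 * m^4 + 8 * t^4" by simp
  finally show ?thesis by simp
qed

lemma fourth_power_estimate: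
  fixes m t r g W M\<^sub>2 M\<^sub>4 \<alpha> :: real
  assumes "0 \<le> g" "0 \<le> \<alpha>" "\<alpha> \<le> 1"
    and buzano: "2 * t\<^sup>2 \<le> r + g" and "g \<le> r" "g \<le> W" "2 * r \<le> M\<^sub>2" "2 * r\<^sup>2 \<le> M\<^sub>4"
  shows "(m + t)^4 \<le> 8 * m^4 + (1 + \<alpha>) * M\<^sub>4 + 2 * (1 - \<alpha>) * W\<^sup>2 + 2 * M\<^sub>2 * W"
proof -
  have "g\<^sup>2 \<le> \<alpha> * r\<^sup>2 + (1 - \<alpha>) * W\<^sup>2"
  proof -
    have "\<alpha> * g\<^sup>2 \<le> \<alpha> * r\<^sup>2" "(1 - \<alpha>) * g\<^sup>2 \<le> (1 - \<alpha>) * W\<^sup>2"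
      using assms(1-3,5,6) by (auto intro!: mult_left_mono power_mono)
    then show ?thesis by (simp add: algebra_simps)
  qed
  moreover have "2 * r * g \<le> M\<^sub>2 * W"
    using mult_mono[OF \<open>2 * r \<le> M\<^sub>2\<close> \<open>g \<le> W\<close>] assms(1,5,7) by simp
  moreover have "\<alpha> * (2 * r\<^sup>2) \<le> \<alpha> * M\<^sub>4" using \<open>2 * r\<^sup>2 \<le> M\<^sub>4\<close> \<open>0 \<le> \<alpha>\<close> by (rule mult_left_mono)
  moreover have "8 * t^4 \<le> 2 * (r + g)\<^sup>2"
  proof -
    have "(2 * t\<^sup>2)\<^sup>2 \<le> (r + g)\<^sup>2" using buzano by (rule power_mono) simp
    then show ?thesis by (simp add: power2_eq_square power4_eq_xxxx algebra_simps)
  qed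
  moreover have "2 * (r + g)\<^sup>2 = 2 * r\<^sup>2 + 2 * (2 * r * g) + 2 * g\<^sup>2"
    by (simp add: power2_eq_square algebra_simps)
  ultimately show ?thesis using power4_add_le[of m t] \<open>2 * r\<^sup>2 \<le> M\<^sub>4\<close> by (simp add: algebra_simps)
qed

lemma block_form_bound:
  fixes A B C D :: "'a::chilbert \<Rightarrow> 'a" and \<alpha> :: real
  assumes "bounded_op A" "bounded_op B" "bounded_op C" "bounded_op D"
    and "0 \<le> \<alpha>" "\<alpha> \<le> 1" and unit: "(norm x1)\<^sup>2 + (norm x2)\<^sup>2 = 1"
  shows "(cmod (cinner (A x1 + B x2) x1 + cinner (C x1 + D x2) x2))^4
    \<le> 8 * (max (nrad A) (nrad D))^4
      + (1 + \<alpha>) * max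
          (onorm (op_plus (abs_sq B \<circ> abs_sq B) (abs_adj_sq C \<circ> abs_adj_sq C)))
          (onorm (op_plus (abs_adj_sq B \<circ> abs_adj_sq B) (abs_sq C \<circ> abs_sq C)))
      + 2 * (1 - \<alpha>) * (max (nrad (B \<circ> C)) (nrad (C \<circ> B)))\<^sup>2
      + 2 * max (onorm (op_plus (abs_sq B) (abs_adj_sq C)))
                (onorm (op_plus (abs_adj_sq B) (abs_sq C)))
          * max (nrad (B \<circ> C)) (nrad (C \<circ> B))"
    (is "_ \<le> ?R")
proof -
  define a where "a = cinner (A x1) x1 + cinner (D x2) x2"
  define s where "s = cinner (B x2) x1 + cinner (C x1) x2"
  define p where "p = norm (B x2, C x1)"
  define q where "q = norm (adj C x2, adj B x1)"
  define g where "g = cmod (cinner (B x2, C x1) (adj C x2, adj B x1))"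
  have "cmod a \<le> max (nrad A) (nrad D)"
    using assms unfolding a_def by (intro diagonal_le_nrad) (simp_all add: bounded_op_def)
  then have "cmod (a + s) \<le> max (nrad A) (nrad D) + cmod s"
    using norm_triangle_ineq[of a s] by linarith
  then have "(cmod (a + s))^4 \<le> (max (nrad A) (nrad D) + cmod s)^4"
    by (rule power_mono) simp
  also have "\<dots> \<le> ?R"
  proof (rule fourth_power_estimate[where r="p * q" and g=g])
    show "2 * (cmod s)\<^sup>2 \<le> p * q + g"
      using off_diagonal_Buzano[OF assms(2,3) unit] by (simp add: s_def p_def q_def g_def)
    show "g \<le> p * q" unfolding g_def p_def q_def by (rule cinner_Cauchy_Schwarz)
    show "g \<le> max (nrad (B \<circ> C)) (nrad (C \<circ> B))"
      unfolding g_def by (rule off_diagonal_cinner_le_nrad[OF assms(2,3) unit])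
    show "2 * (p * q) \<le> max (onorm (op_plus (abs_sq B) (abs_adj_sq C)))
        (onorm (op_plus (abs_adj_sq B) (abs_sq C)))"
      using sum_squares_bound[of p q] off_diagonal_norm_sq[OF assms(2,3) unit]
      by (simp add: p_def q_def mult.assoc)
    show "2 * (p * q)\<^sup>2 \<le> max (onorm (op_plus (abs_sq B \<circ> abs_sq B) (abs_adj_sq C \<circ> abs_adj_sq C)))
        (onorm (op_plus (abs_adj_sq B \<circ> abs_adj_sq B) (abs_sq C \<circ> abs_sq C)))"
      using sum_squares_bound[of "p\<^sup>2" "q\<^sup>2"] off_diagonal_norm_pow4[OF assms(2,3) unit]
      by (simp add: p_def q_def power_mult_distrib flip: power_mult)
  qed (simp_all add: g_def assms(5,6))
  finally show ?thesis by (simp add: a_def s_def cinner_add_left algebra_simps)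
qed

section \<open>The numerical radius of the operator matrix\<close>

lemma Sup_insert_zero_image_power_le:
  fixes f :: "'a \<Rightarrow> real"
  assumes "0 < n" "0 \<le> R" and nonneg: "\<And>x. x \<in> X \<Longrightarrow> 0 \<le> f x"
    and bound: "\<And>x. x \<in> X \<Longrightarrow> f x ^ n \<le> R"
  shows "(Sup (insert 0 (f ` X))) ^ n \<le> R"
proof -
  have le_root: "v \<le> root n R" if "v \<in> insert 0 (f ` X)" for v
    using that
  proof
    assume "v \<in> f ` X"
    then obtain x where "x \<in> X" "v = f x" by blast
    then have "v = root n (v ^ n)" using nonneg \<open>0 < n\<close> by (simp add: real_root_power_cancel)
    also have "\<dots> \<le> root n R" using bound[OF \<open>x \<in> X\<close>] \<open>v = f x\<close> \<open>0 < n\<close> by (simp add: real_root_le_mono)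
    finally show ?thesis .
  qed (simp add: \<open>0 \<le> R\<close> real_root_ge_zero)
  have "Sup (insert 0 (f ` X)) \<le> root n R" using le_root by (intro cSup_least) auto
  moreover have "0 \<le> Sup (insert 0 (f ` X))" by (rule cSup_upper[OF _ bdd_aboveI[OF le_root]]) simp_all
  ultimately have "(Sup (insert 0 (f ` X))) ^ n \<le> (root n R) ^ n" by (rule power_mono)
  then show ?thesis using \<open>0 < n\<close> \<open>0 \<le> R\<close> by simp
qed

lemma max_power_nonneg:
  fixes a b :: real
  assumes "0 \<le> a" "0 \<le> b"
  shows "(max a b) ^ n = max (a ^ n) (b ^ n)"
  using assms by (cases "a \<le> b") (auto simp: max_def power_mono intro: antisym dest: power_mono[of _ _ n])

theorem mainTheorem12:
  fixes A B C D :: "'a::chilbert \<Rightarrow> 'a" and \<alpha> :: real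
  assumes "bounded_op A" and "bounded_op B" and "bounded_op C" and "bounded_op D"
    and "0 \<le> \<alpha>" and "\<alpha> \<le> 1"
  shows "(block_nrad A B C D) ^ 4
    \<le> 8 * max ((nrad A) ^ 4) ((nrad D) ^ 4)
      + (1 + \<alpha>) * max
          (onorm (op_plus (abs_sq B \<circ> abs_sq B) (abs_adj_sq C \<circ> abs_adj_sq C)))
          (onorm (op_plus (abs_adj_sq B \<circ> abs_adj_sq B) (abs_sq C \<circ> abs_sq C)))
      + 2 * (1 - \<alpha>) * max ((nrad (B \<circ> C)) ^ 2) ((nrad (C \<circ> B)) ^ 2)
      + 2 * max (onorm (op_plus (abs_sq B) (abs_adj_sq C)))
                (onorm (op_plus (abs_adj_sq B) (abs_sq C)))
          * max (nrad (B \<circ> C)) (nrad (C \<circ> B))"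
  (is "_ \<le> ?R")
proof -
  have bl: "bounded_linear A" "bounded_linear D" "bounded_linear (B \<circ> C)"
    using assms(1-4) by (simp_all add: bounded_op_def bounded_linear_comp)
  have ops: "bounded_linear (op_plus (abs_sq B) (abs_adj_sq C))"
      "bounded_linear (op_plus (abs_sq B \<circ> abs_sq B) (abs_adj_sq C \<circ> abs_adj_sq C))"
    by (intro bounded_linear_op_plus bounded_linear_comp bounded_linear_abs_sq
        bounded_linear_abs_adj_sq assms(2,3))+
  have "0 \<le> ?R"
    using assms(5,6) nrad_nonneg[OF bl(1)] nrad_nonneg[OF bl(3)] onorm_pos_le[OF ops(1)] onorm_pos_le[OF ops(2)]
    by (intro add_nonneg_nonneg mult_nonneg_nonneg) (auto simp: le_max_iff_disj)
  moreover have max_pow: "max (nrad A ^ 4) (nrad D ^ 4) = (max (nrad A) (nrad D)) ^ 4"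
    "max (nrad (B \<circ> C) ^ 2) (nrad (C \<circ> B) ^ 2) = (max (nrad (B \<circ> C)) (nrad (C \<circ> B))) ^ 2"
    using assms(1-4) by (simp_all add: max_power_nonneg nrad_nonneg bounded_op_def bounded_linear_comp)
  ultimately show ?thesis
    unfolding block_nrad_def
  proof (intro Sup_insert_zero_image_power_le)
    fix x :: "'a \<times> 'a" assume "x \<in> {(x1, x2). (norm x1)\<^sup>2 + (norm x2)\<^sup>2 = 1}"
    then obtain x1 x2 where "x = (x1, x2)" and unit: "(norm x1)\<^sup>2 + (norm x2)\<^sup>2 = 1" by blast
    show "(case x of (x1, x2) \<Rightarrow> cmod (cinner (A x1 + B x2) x1 + cinner (C x1 + D x2) x2)) ^ 4 \<le> ?R"
      using block_form_bound[OF assms unit] \<open>x = (x1, x2)\<close> by (simp add: max_pow)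
  qed auto
qed

end
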